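(* For every nonempty $V_1\subseteq V$, $$\min_{\mathcal{S}:\ s\in\mathcal{S},\ t\notin\mathcal{S},\ \mathcal{S}\cap V=V_1} c(\mathcal{S},V_\mathcal{H}\setminus\mathcal{S})\;=\;|V_\psi|\Big[\mu_\psi(G)+\big(\rho_\psi^*-\rho_\psi(V_1)\big)|V_1|\Big].$$ Moreover, the minimum is attained by a set $\mathcal{S}$ whose intersection with $\Lambda'$ is the set of all groups in $\Lambda'$ whose common node set is contained in $V_1$.
   Context: Let $G=(V,E)$ be a finite simple undirected graph and $\psi=(V_\psi,E_\psi)$ a pattern graph (a finite graph). A $\psi$-instance in $G$ is a subgraph of $G$ (node set and edge set) isomorphic to $\psi$. For $W\subseteq V$, $\mu_\psi(G[W])$ is the number of $\psi$-instances all of whose nodes lie in $W$, $\mu_\psi(G)=\mu_\psi(G[V])$, and for nonempty $W$, $\rho_\psi(W)=\mu_\psi(G[W])/|W|$; $\rho_\psi^*=\max_{\emptyset\ne W\subseteq V}\rho_\psi(W)$. $deg_G(v,\psi)$ is the number of $\psi$-instances containing $v$. $\Lambda'$ is the partition of the set of all $\psi$-instances of $G$ into groups $g$ of instances having the same node set, denoted $\lambda_g$. The flow network $\mathcal{H}=(V_\mathcal{H},E_\mathcal{H},c)$ has $V_\mathcal{H}=V\cup\{\lambda_g:g\in\Lambda'\}\cup\{s,t\}$ (one new node per group) and arcs: for each $v\in V$, $(s,v)$ of capacity $deg_G(v,\psi)$, $(v,t)$ of capacity $|V_\psi|\rho_\psi^*$, $(v,s),(t,v)$ of capacity $0$; for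 each group $g$ and each $v\in\lambda_g$, $(\lambda_g,v)$ of capacity $|g|(|V_\psi|-1)$ and $(v,\lambda_g)$ of capacity $|g|$; no other arcs. For $s\in\mathcal{S}$, $t\notin\mathcal{S}$, $c(\mathcal{S},V_\mathcal{H}\setminus\mathcal{S})$ is the total capacity of arcs from $\mathcal{S}$ to its complement. *)

theory Defs
  imports Complex_Main
begin

definition simple_graph :: "'a set \<Rightarrow> 'a set set \<Rightarrow> bool" where
  "simple_graph V E \<longleftrightarrow> finite V \<and> (\<forall>e\<in>E. e \<subseteq> V \<and> card e = 2)"

definition instances ::
  "'a set \<Rightarrow> 'a set set \<Rightarrow> 'b set \<Rightarrow> 'b set set \<Rightarrow> ('a set \<times> 'a set set) set" where
  "instances V E Vp Ep = {(S, F). S \<subseteq> V \<and> F \<subseteq> E \<and> (\<forall>e\<in>F. e \<subseteq> S) \<and>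
      (\<exists>f. bij_betw f Vp S \<and> F = (image f) ` Ep)}"

definition mu :: "'a set \<Rightarrow> 'a set set \<Rightarrow> 'b set \<Rightarrow> 'b set set \<Rightarrow> 'a set \<Rightarrow> nat" where
  "mu V E Vp Ep W = card {I \<in> instances V E Vp Ep. fst I \<subseteq> W}"

definition rho :: "'a set \<Rightarrow> 'a set set \<Rightarrow> 'b set \<Rightarrow> 'b set set \<Rightarrow> 'a set \<Rightarrow> real" where
  "rho V E Vp Ep W = real (mu V E Vp Ep W) / real (card W)"

definition rho_star :: "'a set \<Rightarrow> 'a set set \<Rightarrow> 'b set \<Rightarrow> 'b set set \<Rightarrow> real" where
  "rho_star V E Vp Ep = Max {rho V E Vp Ep W | W. W \<noteq> {} \<and> W \<subseteq> V}"

definition pdeg :: "'a set \<Rightarrow> 'a set set \<Rightarrow> 'b set \<Rightarrow> 'b set set \<Rightarrow> 'a \<Rightarrow> nat" where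
  "pdeg V E Vp Ep v = card {I \<in> instances V E Vp Ep. v \<in> fst I}"

text \<open>Groups of Lambda': instances with the same node set. A group g is identified by its
  common node set lambda_g (distinct groups have distinct node sets).\<close>
definition group_sets :: "'a set \<Rightarrow> 'a set set \<Rightarrow> 'b set \<Rightarrow> 'b set set \<Rightarrow> 'a set set" where
  "group_sets V E Vp Ep = fst ` instances V E Vp Ep"

definition group_size :: "'a set \<Rightarrow> 'a set set \<Rightarrow> 'b set \<Rightarrow> 'b set set \<Rightarrow> 'a set \<Rightarrow> nat" where
  "group_size V E Vp Ep X = card {I \<in> instances V E Vp Ep. fst I = X}"

datatype 'a hnode = Src | Snk | Vx 'a | Grp "'a set"

definition hnodes :: "'a set \<Rightarrow> 'a set set \<Rightarrow> 'b set \<Rightarrow> 'b set set \<Rightarrow> 'a hnode set" where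
  "hnodes V E Vp Ep = {Src, Snk} \<union> Vx ` V \<union> Grp ` group_sets V E Vp Ep"

text \<open>Capacity function of H (0 on non-arcs, which does not affect cut values).\<close>
fun cap :: "'a set \<Rightarrow> 'a set set \<Rightarrow> 'b set \<Rightarrow> 'b set set \<Rightarrow> 'a hnode \<Rightarrow> 'a hnode \<Rightarrow> real" where
  "cap V E Vp Ep Src (Vx v) = (if v \<in> V then real (pdeg V E Vp Ep v) else 0)"
| "cap V E Vp Ep (Vx v) Snk =
     (if v \<in> V then real (card Vp) * rho_star V E Vp Ep else 0)"
| "cap V E Vp Ep (Grp X) (Vx v) =
     (if X \<in> group_sets V E Vp Ep \<and> v \<in> X
      then real (group_size V E Vp Ep X) * (real (card Vp) - 1) else 0)"
| "cap V E Vp Ep (Vx v) (Grp X) =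
     (if X \<in> group_sets V E Vp Ep \<and> v \<in> X
      then real (group_size V E Vp Ep X) else 0)"
| "cap V E Vp Ep _ _ = 0"

definition cut_cap :: "'a set \<Rightarrow> 'a set set \<Rightarrow> 'b set \<Rightarrow> 'b set set \<Rightarrow> 'a hnode set \<Rightarrow> real" where
  "cut_cap V E Vp Ep S =
     (\<Sum>x\<in>S. \<Sum>y\<in>hnodes V E Vp Ep - S. cap V E Vp Ep x y)"

definition adm_cut :: "'a set \<Rightarrow> 'a set set \<Rightarrow> 'b set \<Rightarrow> 'b set set \<Rightarrow> 'a set \<Rightarrow> 'a hnode set \<Rightarrow> bool" where
  "adm_cut V E Vp Ep V1 S \<longleftrightarrow> S \<subseteq> hnodes V E Vp Ep \<and> Src \<in> S \<and> Snk \<notin> S \<and>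
     {v \<in> V. Vx v \<in> S} = V1"

end

theory Submission
  imports Defs
begin

text \<open>An admissible cut is determined by the set \<open>B\<close> of groups it contains. Distributing
  the capacities of the cut arcs over the \<open>\<psi>\<close>-instances, an instance with node set \<open>X\<close>
  pays one unit for every node of \<open>X\<close> outside \<open>V\<^sub>1\<close> (arcs leaving \<open>s\<close>), and in addition
  \<open>|V\<^sub>\<psi>| - 1\<close> per such node if \<open>\<lambda>\<^sub>X \<in> B\<close> (arcs leaving \<open>\<lambda>\<^sub>X\<close>), or one unit per node of
  \<open>X \<inter> V\<^sub>1\<close> if \<open>\<lambda>\<^sub>X \<notin> B\<close> (arcs entering \<open>\<lambda>\<^sub>X\<close>). Since \<open>|X| = |V\<^sub>\<psi>|\<close>, this is at least
  \<open>|V\<^sub>\<psi>|\<close> unless \<open>X \<subseteq> V\<^sub>1\<close>, with equality throughout when \<open>B\<close> consists of the groups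
  inside \<open>V\<^sub>1\<close>. The arcs into \<open>t\<close> add \<open>|V\<^sub>1| |V\<^sub>\<psi>| \<rho>\<^sup>*\<close>, and the instances not inside \<open>V\<^sub>1\<close>
  number \<open>\<mu>(G) - \<rho>(V\<^sub>1) |V\<^sub>1|\<close>.\<close>

lemma instance_nodes:
  assumes "I \<in> instances V E Vp Ep"
  shows "fst I \<subseteq> V" and "card (fst I) = card Vp"
  using assms unfolding instances_def by (auto dest: bij_betw_same_card)

lemma finite_instance_nodes:
  assumes "simple_graph V E" and "I \<in> instances V E Vp Ep"
  shows "finite (fst I)"
  using assms(1) instance_nodes(1)[OF assms(2)] finite_subset
  unfolding simple_graph_def by blast

lemma finite_instances:
  assumes "simple_graph V E"
  shows "finite (instances V E Vp Ep)"
proof -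
  have "finite V" and "E \<subseteq> Pow V" using assms by (auto simp: simple_graph_def)
  moreover have "instances V E Vp Ep \<subseteq> Pow V \<times> Pow E" unfolding instances_def by auto
  ultimately show ?thesis by (meson finite_Pow_iff finite_SigmaI finite_subset)
qed

lemma finite_group_sets:
  assumes "simple_graph V E"
  shows "finite (group_sets V E Vp Ep)"
  unfolding group_sets_def by (rule finite_imageI[OF finite_instances[OF assms]])

lemma group_sets_subset:
  assumes "X \<in> group_sets V E Vp Ep"
  shows "X \<subseteq> V"
  using assms instance_nodes(1) unfolding group_sets_def by blast

lemma sum_if_mem:
  assumes "finite A"
  shows "(\<Sum>v\<in>A. if v \<in> X then c else 0) = c * (of_nat (card (X \<inter> A)) :: 'b::comm_semiring_1)"
proof -
  have "(\<Sum>v\<in>A. if v \<in> X then c else 0) = c * (\<Sum>v\<in>A. of_bool (v \<in> X))"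
    by (auto simp: sum_distrib_left intro!: sum.cong)
  also have "\<dots> = c * of_nat (card (X \<inter> A))"
    using assms by (simp add: Int_commute)
  finally show ?thesis .
qed

lemma sum_hnodes_split:
  fixes f :: "'a hnode \<Rightarrow> 'b::comm_monoid_add"
  assumes "finite A" "finite B" "n = Src \<or> n = Snk"
  shows "sum f (insert n (Vx ` A \<union> Grp ` B))
           = f n + (\<Sum>v\<in>A. f (Vx v)) + (\<Sum>X\<in>B. f (Grp X))"
proof -
  have "n \<notin> Vx ` A \<union> Grp ` B" and "Vx ` A \<inter> Grp ` B = {}" using assms(3) by auto
  then have "sum f (insert n (Vx ` A \<union> Grp ` B)) = f n + (sum f (Vx ` A) + sum f (Grp ` B))"
    using assms(1,2) by (simp add: sum.union_disjoint)
  also have "\<dots> = f n + (\<Sum>v\<in>A. f (Vx v)) + (\<Sum>X\<in>B. f (Grp X))"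
    by (simp add: sum.reindex inj_on_def add.assoc)
  finally show ?thesis .
qed

lemma cut_cap_eq_arc_sums:
  assumes "simple_graph V E" and "A \<subseteq> V" and "B \<subseteq> group_sets V E Vp Ep"
    and S: "S = insert Src (Vx ` A \<union> Grp ` B)"
  shows "cut_cap V E Vp Ep S =
     (\<Sum>v\<in>V - A. real (pdeg V E Vp Ep v))
     + real (card A) * (real (card Vp) * rho_star V E Vp Ep)
     + ((\<Sum>v\<in>A. \<Sum>X\<in>group_sets V E Vp Ep - B.
           if v \<in> X then real (group_size V E Vp Ep X) else 0)
       + (\<Sum>X\<in>B. \<Sum>w\<in>V - A.
           if w \<in> X then real (group_size V E Vp Ep X) * (real (card Vp) - 1) else 0))"
proof -
  let ?G = "group_sets V E Vp Ep" and ?c = "cap V E Vp Ep"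
  have fV: "finite V" using assms(1) by (simp add: simple_graph_def)
  have fG: "finite ?G" using finite_group_sets[OF assms(1)] .
  have fA: "finite A" and fB: "finite B"
    using assms(2,3) fV fG finite_subset by auto
  have "hnodes V E Vp Ep - S = insert Snk (Vx ` (V - A) \<union> Grp ` (?G - B))"
    using assms(2,3) unfolding S hnodes_def by auto
  then have "cut_cap V E Vp Ep S = (\<Sum>x\<in>S. ?c x Snk + (\<Sum>v\<in>V - A. ?c x (Vx v))
                                     + (\<Sum>X\<in>?G - B. ?c x (Grp X)))"
    unfolding cut_cap_def using fV fG by (simp add: sum_hnodes_split)
  also have "\<dots> = (\<Sum>v\<in>V - A. ?c Src (Vx v))
     + (\<Sum>v\<in>A. ?c (Vx v) Snk + (\<Sum>X\<in>?G - B. ?c (Vx v) (Grp X)))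
     + (\<Sum>X\<in>B. \<Sum>w\<in>V - A. ?c (Grp X) (Vx w))"
    unfolding S by (subst sum_hnodes_split[OF fA fB]) simp_all
  also have "\<dots> = (\<Sum>v\<in>V - A. real (pdeg V E Vp Ep v))
     + (\<Sum>v\<in>A. real (card Vp) * rho_star V E Vp Ep
          + (\<Sum>X\<in>?G - B. if v \<in> X then real (group_size V E Vp Ep X) else 0))
     + (\<Sum>X\<in>B. \<Sum>w\<in>V - A.
          if w \<in> X then real (group_size V E Vp Ep X) * (real (card Vp) - 1) else 0)"
    using assms(2,3) by (intro arg_cong2[where f = "(+)"] sum.cong) (auto intro!: sum.cong)
  finally show ?thesis by (simp add: sum.distrib add.assoc)
qed

lemma sum_pdeg_outside:
  assumes "simple_graph V E"
  shows "(\<Sum>v\<in>V - A. real (pdeg V E Vp Ep v))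
           = (\<Sum>I\<in>instances V E Vp Ep. real (card (fst I - A)))"
proof -
  let ?I = "instances V E Vp Ep"
  have fV: "finite V" using assms by (simp add: simple_graph_def)
  have fI: "finite ?I" using finite_instances[OF assms] .
  have "real (pdeg V E Vp Ep v) = (\<Sum>I\<in>?I. if v \<in> fst I then 1 else 0)" for v
    unfolding pdeg_def using sum.inter_filter[OF fI, of "\<lambda>_. 1 :: real"] by simp
  then have "(\<Sum>v\<in>V - A. real (pdeg V E Vp Ep v))
          = (\<Sum>v\<in>V - A. \<Sum>I\<in>?I. if v \<in> fst I then 1 else 0)"
    by simp
  also have "\<dots> = (\<Sum>I\<in>?I. \<Sum>v\<in>V - A. if v \<in> fst I then 1 else 0)"
    by (rule sum.swap)
  also have "\<dots> = (\<Sum>I\<in>?I. real (card (fst I - A)))"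
  proof (rule sum.cong[OF refl])
    fix I assume "I \<in> ?I"
    then have "fst I \<inter> (V - A) = fst I - A" using instance_nodes(1) by blast
    then show "(\<Sum>v\<in>V - A. if v \<in> fst I then 1 else 0) = real (card (fst I - A))"
      using fV by (simp add: sum_if_mem)
  qed
  finally show ?thesis .
qed

lemma sum_group_arcs:
  assumes "simple_graph V E" and "A \<subseteq> V" and "B \<subseteq> group_sets V E Vp Ep"
  shows "(\<Sum>v\<in>A. \<Sum>X\<in>group_sets V E Vp Ep - B.
            if v \<in> X then real (group_size V E Vp Ep X) else 0)
       + (\<Sum>X\<in>B. \<Sum>w\<in>V - A.
            if w \<in> X then real (group_size V E Vp Ep X) * (real (card Vp) - 1) else 0)
       = (\<Sum>I\<in>instances V E Vp Ep. if fst I \<in> B then (real (card Vp) - 1) * real (card (fst I - A))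
                                     else real (card (fst I \<inter> A)))"
proof -
  let ?G = "group_sets V E Vp Ep" and ?gs = "\<lambda>X. real (group_size V E Vp Ep X)"
  let ?h = "\<lambda>X. if X \<in> B then (real (card Vp) - 1) * real (card (X - A)) else real (card (X \<inter> A))"
  have fV: "finite V" using assms(1) by (simp add: simple_graph_def)
  have fA: "finite A" using fV assms(2) finite_subset by blast
  have fG: "finite ?G" using finite_group_sets[OF assms(1)] .
  have "(\<Sum>v\<in>A. \<Sum>X\<in>?G - B. if v \<in> X then ?gs X else 0)
          = (\<Sum>X\<in>?G - B. \<Sum>v\<in>A. if v \<in> X then ?gs X else 0)"
    by (rule sum.swap)
  also have "\<dots> = (\<Sum>X\<in>?G - B. ?gs X * ?h X)"
    using fA by (intro sum.cong) (auto simp: sum_if_mem)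
  finally have outside_B: "(\<Sum>v\<in>A. \<Sum>X\<in>?G - B. if v \<in> X then ?gs X else 0)
                             = (\<Sum>X\<in>?G - B. ?gs X * ?h X)" .
  have "X \<inter> (V - A) = X - A" if "X \<in> B" for X
    using that assms(3) group_sets_subset by blast
  then have inside_B: "(\<Sum>X\<in>B. \<Sum>w\<in>V - A. if w \<in> X then ?gs X * (real (card Vp) - 1) else 0)
                         = (\<Sum>X\<in>B. ?gs X * ?h X)"
    using fV by (intro sum.cong) (auto simp: sum_if_mem)
  have "(\<Sum>X\<in>?G. ?gs X * ?h X) = (\<Sum>X\<in>?G - B. ?gs X * ?h X) + (\<Sum>X\<in>B. ?gs X * ?h X)"
    using sum.subset_diff[OF assms(3) fG] .
  also have "(\<Sum>X\<in>?G. ?gs X * ?h X) = (\<Sum>I\<in>instances V E Vp Ep. ?h (fst I))"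
    using sum_fun_comp[OF finite_instances[OF assms(1), of Vp Ep] fG, where g = fst and f = ?h]
    by (simp add: group_sets_def group_size_def conj_commute)
  finally show ?thesis using outside_B inside_B by simp
qed

text \<open>What an instance with node set \<open>X\<close> pays in a cut containing exactly the nodes \<open>A\<close> and
  the groups \<open>B\<close>, when \<open>|V\<^sub>\<psi>| = k\<close>.\<close>

definition instance_cut_cost :: "nat \<Rightarrow> 'a set set \<Rightarrow> 'a set \<Rightarrow> 'a set \<Rightarrow> real" where
  "instance_cut_cost k B A X = real (card (X - A))
     + (if X \<in> B then (real k - 1) * real (card (X - A)) else real (card (X \<inter> A)))"

lemma cut_cap_eq_sum_instance_cut_cost:
  assumes "simple_graph V E" and "A \<subseteq> V" and "B \<subseteq> group_sets V E Vp Ep"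
    and "S = insert Src (Vx ` A \<union> Grp ` B)"
  shows "cut_cap V E Vp Ep S
           = (\<Sum>I\<in>instances V E Vp Ep. instance_cut_cost (card Vp) B A (fst I))
             + real (card A) * (real (card Vp) * rho_star V E Vp Ep)"
  unfolding cut_cap_eq_arc_sums[OF assms] sum_pdeg_outside[OF assms(1)]
    sum_group_arcs[OF assms(1-3)] instance_cut_cost_def
  by (simp add: sum.distrib)

lemma instance_cut_cost_ge:
  assumes "finite X"
  shows "(if X \<subseteq> A then 0 else real (card X)) \<le> instance_cut_cost (card X) B A X"
proof (cases "X \<in> B")
  case True
  then have "instance_cut_cost (card X) B A X = real (card X) * real (card (X - A))"
    by (simp add: instance_cut_cost_def algebra_simps)
  moreover have "X \<subseteq> A \<or> 1 \<le> card (X - A)"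
    using assms by (auto simp: Suc_le_eq card_gt_0_iff)
  ultimately show ?thesis
    by (auto simp: mult_le_cancel_left1)
next
  case False
  then show ?thesis
    using card_Int_Diff[OF assms, of A] by (simp add: instance_cut_cost_def)
qed

lemma instance_cut_cost_eq:
  assumes "finite X" and "X \<in> B \<longleftrightarrow> X \<subseteq> A"
  shows "instance_cut_cost (card X) B A X = (if X \<subseteq> A then 0 else real (card X))"
proof (cases "X \<subseteq> A")
  case True
  then have "card (X - A) = 0" by (metis Diff_eq_empty_iff card.empty)
  with True assms(2) show ?thesis by (simp add: instance_cut_cost_def)
next
  case False
  with assms card_Int_Diff[OF assms(1), of A] show ?thesis
    by (simp add: instance_cut_cost_def)
qed

lemma adm_cut_eq_insert:
  assumes "adm_cut V E Vp Ep A S"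
  shows "S = insert Src (Vx ` A \<union> Grp ` {X \<in> group_sets V E Vp Ep. Grp X \<in> S})"
proof -
  have "S \<subseteq> {Src, Snk} \<union> Vx ` V \<union> Grp ` group_sets V E Vp Ep" and "Src \<in> S" "Snk \<notin> S"
    and "{v \<in> V. Vx v \<in> S} = A"
    using assms unfolding adm_cut_def hnodes_def by auto
  then show ?thesis by auto
qed

lemma cut_cap_ge_instances_not_inside:
  assumes "simple_graph V E" and "A \<subseteq> V" and "adm_cut V E Vp Ep A S"
  shows "(\<Sum>I\<in>instances V E Vp Ep. if fst I \<subseteq> A then 0 else real (card Vp))
           + real (card A) * (real (card Vp) * rho_star V E Vp Ep) \<le> cut_cap V E Vp Ep S"
proof -
  let ?B = "{X \<in> group_sets V E Vp Ep. Grp X \<in> S}"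
  have "(\<Sum>I\<in>instances V E Vp Ep. if fst I \<subseteq> A then 0 else real (card Vp))
               \<le> (\<Sum>I\<in>instances V E Vp Ep. instance_cut_cost (card Vp) ?B A (fst I))"
  proof (rule sum_mono)
    fix I assume I: "I \<in> instances V E Vp Ep"
    show "(if fst I \<subseteq> A then 0 else real (card Vp)) \<le> instance_cut_cost (card Vp) ?B A (fst I)"
      using instance_cut_cost_ge[OF finite_instance_nodes[OF assms(1) I]]
      unfolding instance_nodes(2)[OF I] .
  qed
  moreover have "?B \<subseteq> group_sets V E Vp Ep" by blast
  note cut_cap_eq_sum_instance_cut_cost[OF assms(1,2) this adm_cut_eq_insert[OF assms(3)]]
  ultimately show ?thesis by simp
qed

lemma cut_cap_groups_inside_eq:
  assumes "simple_graph V E" and "A \<subseteq> V"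
    and "S = insert Src (Vx ` A \<union> Grp ` {X \<in> group_sets V E Vp Ep. X \<subseteq> A})"
  shows "cut_cap V E Vp Ep S = (\<Sum>I\<in>instances V E Vp Ep. if fst I \<subseteq> A then 0 else real (card Vp))
           + real (card A) * (real (card Vp) * rho_star V E Vp Ep)"
proof -
  let ?B = "{X \<in> group_sets V E Vp Ep. X \<subseteq> A}"
  have "instance_cut_cost (card Vp) ?B A (fst I) = (if fst I \<subseteq> A then 0 else real (card Vp))"
    if "I \<in> instances V E Vp Ep" for I
  proof -
    have "fst I \<in> ?B \<longleftrightarrow> fst I \<subseteq> A"
      using that by (simp add: group_sets_def)
    from instance_cut_cost_eq[OF finite_instance_nodes[OF assms(1) that] this]
    show ?thesis unfolding instance_nodes(2)[OF that] .
  qed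
  moreover have "?B \<subseteq> group_sets V E Vp Ep" by blast
  note cut_cap_eq_sum_instance_cut_cost[OF assms(1,2) this assms(3)]
  ultimately show ?thesis by simp
qed

lemma sum_instances_not_inside:
  assumes "simple_graph V E"
  shows "(\<Sum>I\<in>instances V E Vp Ep. if fst I \<subseteq> A then 0 else c)
           = c * (real (mu V E Vp Ep V) - real (mu V E Vp Ep A))"
proof -
  have fI: "finite (instances V E Vp Ep)" using finite_instances[OF assms] .
  have "{I \<in> instances V E Vp Ep. fst I \<subseteq> V} = instances V E Vp Ep"
    using instance_nodes(1) by blast
  then have "mu V E Vp Ep V = card (instances V E Vp Ep)"
    by (simp add: mu_def)
  moreover have "(\<Sum>I\<in>instances V E Vp Ep. if fst I \<subseteq> A then 0 else c)
      = (\<Sum>I\<in>instances V E Vp Ep. c - (if fst I \<subseteq> A then c else 0))"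
    by (rule sum.cong) auto
  ultimately show ?thesis
    unfolding sum_subtractf mu_def using sum.inter_filter[OF fI, of "\<lambda>_. c"]
    by (simp add: algebra_simps)
qed

lemma finite_adm_cut_values:
  assumes "simple_graph V E"
  shows "finite {cut_cap V E Vp Ep S | S. adm_cut V E Vp Ep A S}"
proof -
  have "finite (hnodes V E Vp Ep)"
    using assms finite_group_sets[OF assms, of Vp Ep] by (simp add: hnodes_def simple_graph_def)
  moreover have "{cut_cap V E Vp Ep S | S. adm_cut V E Vp Ep A S}
                   \<subseteq> cut_cap V E Vp Ep ` Pow (hnodes V E Vp Ep)"
    unfolding adm_cut_def by auto
  ultimately show ?thesis using finite_subset by blast
qed

theorem lemma10:
  fixes V :: "'a set" and E :: "'a set set" and Vp :: "'b set" and Ep :: "'b set set"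
    and V1 :: "'a set"
  assumes "simple_graph V E" and "simple_graph Vp Ep"
    and "V1 \<noteq> {}" and "V1 \<subseteq> V"
  shows "Min {cut_cap V E Vp Ep S | S. adm_cut V E Vp Ep V1 S}
           = real (card Vp) * (real (mu V E Vp Ep V)
              + (rho_star V E Vp Ep - rho V E Vp Ep V1) * real (card V1))
         \<and> (\<exists>S. adm_cut V E Vp Ep V1 S
              \<and> cut_cap V E Vp Ep S = real (card Vp) * (real (mu V E Vp Ep V)
                   + (rho_star V E Vp Ep - rho V E Vp Ep V1) * real (card V1))
              \<and> {X \<in> group_sets V E Vp Ep. Grp X \<in> S} = {X \<in> group_sets V E Vp Ep. X \<subseteq> V1})"
proof -
  let ?val = "real (card Vp) * (real (mu V E Vp Ep V)
                + (rho_star V E Vp Ep - rho V E Vp Ep V1) * real (card V1))"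
  let ?cuts = "{cut_cap V E Vp Ep S | S. adm_cut V E Vp Ep V1 S}"
  define S0 where "S0 = insert Src (Vx ` V1 \<union> Grp ` {X \<in> group_sets V E Vp Ep. X \<subseteq> V1})"
  have "finite V1"
    using assms(1,4) finite_subset unfolding simple_graph_def by blast
  with assms(3) have "card V1 \<noteq> 0" by simp
  then have "rho V E Vp Ep V1 * real (card V1) = real (mu V E Vp Ep V1)"
    by (simp add: rho_def)
  then have val: "?val = (\<Sum>I\<in>instances V E Vp Ep. if fst I \<subseteq> V1 then 0 else real (card Vp))
                           + real (card V1) * (real (card Vp) * rho_star V E Vp Ep)"
    unfolding sum_instances_not_inside[OF assms(1)] by (simp add: algebra_simps)
  have S0: "adm_cut V E Vp Ep V1 S0"
    "{X \<in> group_sets V E Vp Ep. Grp X \<in> S0} = {X \<in> group_sets V E Vp Ep. X \<subseteq> V1}"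
    using assms(4) by (auto simp: S0_def adm_cut_def hnodes_def)
  have cut_S0: "cut_cap V E Vp Ep S0 = ?val"
    unfolding val by (rule cut_cap_groups_inside_eq[OF assms(1,4) S0_def])
  have "Min ?cuts = ?val"
  proof (rule Min_eqI[OF finite_adm_cut_values[OF assms(1)]])
    show "?val \<le> c" if "c \<in> ?cuts" for c
      using that cut_cap_ge_instances_not_inside[OF assms(1,4)] val by auto
    show "?val \<in> ?cuts" using S0(1) cut_S0 by (metis (mono_tags, lifting) mem_Collect_eq)
  qed
  with S0 cut_S0 show ?thesis by blast
qed

end
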